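(* For integers $n,k\ge1$, the set $C^0_{n,k,3}$ is the Zariski closure of $$\{H_1^3+\dots+H_k^3:\ H_1,\dots,H_k\in V \text{ linearly dependent}\}\subseteq\operatorname{Sym}^3V.$$
   Context: $V$ is the space of real linear forms in $u=(u_1,\dots,u_n)$ (identified with $\mathbb{R}^n$), and $\operatorname{Sym}^3V$ the space of real cubic forms. $\Theta^0_{n,k}=\{((L_1,\dots,L_k),(\lambda_1,\dots,\lambda_k))\in V^k\times\mathbb{R}^k:\sum_i\lambda_i=1,\ \sum_i\lambda_iL_i=0\}$, $\phi_{n,k,3}:\Theta^0_{n,k}\to\operatorname{Sym}^3V$, $((L_i),(\lambda_i))\mapsto\lambda_1L_1^3+\dots+\lambda_kL_k^3$, and $C^0_{n,k,3}$ is the Zariski closure of the image of $\phi_{n,k,3}$. *)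

theory Defs
  imports "HOL-Analysis.Analysis"
begin

inductive poly_fun :: "('a::euclidean_space \<Rightarrow> real) \<Rightarrow> bool" where
  pf_const: "poly_fun (\<lambda>x. c)"
| pf_coord: "b \<in> Basis \<Longrightarrow> poly_fun (\<lambda>x. x \<bullet> b)"
| pf_add: "poly_fun p \<Longrightarrow> poly_fun q \<Longrightarrow> poly_fun (\<lambda>x. p x + q x)"
| pf_mult: "poly_fun p \<Longrightarrow> poly_fun q \<Longrightarrow> poly_fun (\<lambda>x. p x * q x)"

definition zariski_closed :: "'a::euclidean_space set \<Rightarrow> bool" where
  "zariski_closed S \<longleftrightarrow> (\<exists>P. (\<forall>p\<in>P. poly_fun p) \<and> S = {x. \<forall>p\<in>P. p x = 0})"

definition zariski_closure :: "'a::euclidean_space set \<Rightarrow> 'a set" where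
  "zariski_closure S = \<Inter>{T. zariski_closed T \<and> S \<subseteq> T}"

text \<open>Cubic forms are represented by their symmetric coefficient tensors in
  real^'n^'n^'n; the cube L^3 of a linear form L corresponds to the tensor L (x) L (x) L.\<close>
definition cube3 :: "real^'n \<Rightarrow> real^'n^'n^'n" where
  "cube3 L = (\<chi> a b c. L$a * L$b * L$c)"

definition Theta0 :: "(('k::finite \<Rightarrow> real^'n) \<times> ('k \<Rightarrow> real)) set" where
  "Theta0 = {(L, lam). (\<Sum>i\<in>UNIV. lam i) = 1 \<and> (\<Sum>i\<in>UNIV. lam i *\<^sub>R L i) = 0}"

definition phi3 :: "('k::finite \<Rightarrow> real^'n) \<times> ('k \<Rightarrow> real) \<Rightarrow> real^'n^'n^'n" where
  "phi3 = (\<lambda>(L, lam). \<Sum>i\<in>UNIV. lam i *\<^sub>R cube3 (L i))"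

definition C0 :: "'k::finite itself \<Rightarrow> (real^'n^'n^'n) set" where
  "C0 _ = zariski_closure (phi3 ` (Theta0 :: (('k \<Rightarrow> real^'n) \<times> ('k \<Rightarrow> real)) set))"

definition lin_dep_family :: "('k::finite \<Rightarrow> real^'n) \<Rightarrow> bool" where
  "lin_dep_family H \<longleftrightarrow> (\<exists>c. c \<noteq> (\<lambda>_. 0) \<and> (\<Sum>i\<in>UNIV. c i *\<^sub>R H i) = 0)"

end

theory Submission
  imports Defs "HOL-Computational_Algebra.Polynomial"
begin

(* A point \<Sum> lam_i L_i^3 of the image of phi3 is the sum of cubes of the forms
   lam_i^(1/3) L_i, which satisfy the relation with coefficients lam_i^(2/3), not all
   zero since \<Sum> lam_i = 1.  Conversely, a sum of cubes \<Sum> H_i^3 lies in the image as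
   soon as the H_i satisfy a relation with positive coefficients w_i: take lam_i
   proportional to w_i^(3/2) and L_i = lam_i^(-1/3) H_i.  An arbitrary dependent family
   is deformed along a line H + t E into families with positive relations for all
   large t.  The sum of cubes then traces a polynomial curve, so a polynomial vanishing
   on the image vanishes on the curve for large t, hence identically, in particular
   at t = 0. *)

definition polynomial_curve :: "(real \<Rightarrow> 'a::euclidean_space) \<Rightarrow> bool" where
  "polynomial_curve \<gamma> \<longleftrightarrow> (\<forall>b\<in>Basis. \<exists>q. \<forall>t. \<gamma> t \<bullet> b = poly q t)"

lemma polynomial_curve_real: "polynomial_curve f \<longleftrightarrow> (\<exists>q. \<forall>t. f t = poly q t)"
  by (simp add: polynomial_curve_def)

lemma polynomial_curve_vec:
  fixes \<gamma> :: "real \<Rightarrow> 'a::euclidean_space^'n"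
  shows "polynomial_curve \<gamma> \<longleftrightarrow> (\<forall>i. polynomial_curve (\<lambda>t. \<gamma> t $ i))"
  by (auto simp: polynomial_curve_def Basis_vec_def inner_axis)

lemma polynomial_curve_const: "polynomial_curve (\<lambda>t. c)"
  unfolding polynomial_curve_def by (metis poly_0 poly_pCons mult_zero_right add_0_right)

lemma polynomial_curve_line:
  fixes A B :: "'a::euclidean_space"
  shows "polynomial_curve (\<lambda>t. A + t *\<^sub>R B)"
  unfolding polynomial_curve_def
proof
  fix b :: 'a
  show "\<exists>q. \<forall>t. (A + t *\<^sub>R B) \<bullet> b = poly q t"
    by (intro exI[of _ "[:A \<bullet> b, B \<bullet> b:]"]) (simp add: inner_add_left)
qed

lemma polynomial_curve_add:
  "polynomial_curve \<gamma> \<Longrightarrow> polynomial_curve \<delta> \<Longrightarrow>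
    polynomial_curve (\<lambda>t. \<gamma> t + \<delta> t)"
  unfolding polynomial_curve_def by (metis inner_add_left poly_add)

lemma polynomial_curve_sum:
  "finite I \<Longrightarrow> (\<And>i. i \<in> I \<Longrightarrow> polynomial_curve (\<gamma> i)) \<Longrightarrow>
    polynomial_curve (\<lambda>t. \<Sum>i\<in>I. \<gamma> i t)"
  by (induction I rule: finite_induct) (auto intro: polynomial_curve_const polynomial_curve_add)

lemma polynomial_curve_cube3:
  fixes L :: "real \<Rightarrow> real^'n"
  assumes "polynomial_curve L"
  shows "polynomial_curve (\<lambda>t. cube3 (L t))"
proof -
  have "\<exists>q. \<forall>t. L t $ a = poly q t" for a
    using assms by (simp add: polynomial_curve_vec polynomial_curve_real)
  then obtain q where q: "\<And>a t. L t $ a = poly (q a) t" by metis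
  show ?thesis
    unfolding polynomial_curve_vec polynomial_curve_real cube3_def
    by (auto intro!: exI[of _ "q a * q b * q c" for a b c] simp: q)
qed

lemma poly_fun_comp_polynomial_curve:
  assumes "poly_fun p" and "polynomial_curve \<gamma>"
  shows "\<exists>q. \<forall>t. p (\<gamma> t) = poly q t"
  using assms(1)
proof induction
  case (pf_const c)
  show ?case by (metis poly_0 poly_pCons mult_zero_right add_0_right)
next
  case (pf_coord b)
  then show ?case using assms(2) by (simp add: polynomial_curve_def)
next
  case (pf_add p q)
  then show ?case by (metis poly_add)
next
  case (pf_mult p q)
  then show ?case by (metis poly_mult)
qed

lemma poly_fun_vanishes_along_curve:
  assumes "poly_fun p" and "polynomial_curve \<gamma>"
    and "\<And>t. t > M \<Longrightarrow> p (\<gamma> t) = 0"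
  shows "p (\<gamma> s) = 0"
proof -
  obtain q where q: "\<And>t. p (\<gamma> t) = poly q t"
    using poly_fun_comp_polynomial_curve[OF assms(1,2)] by blast
  have "{M<..} \<subseteq> {t. poly q t = 0}"
    using assms(3) q by auto
  then have "q = 0"
    using poly_roots_finite infinite_Ioi finite_subset by blast
  then show ?thesis
    using q by simp
qed

lemma mem_zariski_closureI:
  assumes "\<And>p. poly_fun p \<Longrightarrow> \<forall>y\<in>S. p y = 0 \<Longrightarrow> p x = 0"
  shows "x \<in> zariski_closure S"
  using assms unfolding zariski_closure_def zariski_closed_def by blast

lemma zariski_closure_eqI:
  assumes "A \<subseteq> B" and "B \<subseteq> zariski_closure A"
  shows "zariski_closure A = zariski_closure B"
  using assms unfolding zariski_closure_def by blast

abbreviation phi3_image :: "'k::finite itself \<Rightarrow> (real^'n^'n^'n) set" where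
  "phi3_image _ \<equiv> phi3 ` (Theta0 :: (('k \<Rightarrow> real^'n) \<times> ('k \<Rightarrow> real)) set)"

lemma cube3_scaleR: "cube3 (a *\<^sub>R L) = a ^ 3 *\<^sub>R cube3 L"
  by (simp add: cube3_def vec_eq_iff power3_eq_cube)

lemma sum_cube3_mem_phi3_image:
  fixes G :: "'k::finite \<Rightarrow> real^'n"
  assumes w: "\<And>i. w i > 0" and rel: "(\<Sum>i\<in>UNIV. w i *\<^sub>R G i) = 0"
  shows "(\<Sum>i\<in>UNIV. cube3 (G i)) \<in> phi3_image TYPE('k)"
proof -
  define r where "r i = sqrt (w i)" for i
  have r: "r i > 0" "r i ^ 2 = w i" for i
    using w[of i] by (auto simp: r_def)
  define s where "s = (\<Sum>i\<in>UNIV. r i ^ 3)"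
  have s: "s > 0"
    unfolding s_def using r by (intro sum_pos) auto
  have cbrt_s: "root 3 s ^ 3 = s"
    using s by (simp add: real_root_pow_pos)
  define lam where "lam i = r i ^ 3 / s" for i
  define L where "L i = (root 3 s / r i) *\<^sub>R G i" for i
  have lam_cube: "lam i * (root 3 s / r i) ^ 3 = 1" for i
    using r(1)[of i] s cbrt_s by (simp add: lam_def power_divide)
  have lam_L: "lam i *\<^sub>R L i = (root 3 s / s) *\<^sub>R (w i *\<^sub>R G i)" for i
    using r[of i] s by (simp add: lam_def L_def power2_eq_square power3_eq_cube field_simps)
  have "(\<Sum>i\<in>UNIV. lam i) = 1"
    using s by (simp add: lam_def s_def flip: sum_divide_distrib)
  moreover have "(\<Sum>i\<in>UNIV. lam i *\<^sub>R L i) = 0"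
    unfolding lam_L scaleR_sum_right[symmetric] rel by simp
  ultimately have "(L, lam) \<in> Theta0"
    by (simp add: Theta0_def)
  moreover have "phi3 (L, lam) = (\<Sum>i\<in>UNIV. cube3 (G i))"
    by (simp add: phi3_def L_def cube3_scaleR lam_cube)
  ultimately show ?thesis
    by (metis image_eqI)
qed

lemma phi3_image_subset_sums_of_dependent_cubes:
  "phi3_image TYPE('k::finite)
    \<subseteq> {(\<Sum>i\<in>UNIV. cube3 (H i)) | H :: 'k \<Rightarrow> real^'n. lin_dep_family H}"
  (is "?A \<subseteq> ?B")
proof
  fix y
  assume "y \<in> ?A"
  then obtain L :: "'k \<Rightarrow> real^'n" and lam
    where y: "y = phi3 (L, lam)" and "(L, lam) \<in> Theta0"
    by (metis imageE prod.exhaust)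
  then have sum_lam: "(\<Sum>i\<in>UNIV. lam i) = 1"
    and rel: "(\<Sum>i\<in>UNIV. lam i *\<^sub>R L i) = 0"
    by (auto simp: Theta0_def)
  define H where "H i = root 3 (lam i) *\<^sub>R L i" for i
  have cbrt_cube: "root 3 a ^ 3 = a" for a :: real
    by (simp add: odd_real_root_pow)
  have "lin_dep_family H"
    unfolding lin_dep_family_def
  proof (intro exI conjI)
    show "(\<lambda>i. root 3 (lam i) ^ 2) \<noteq> (\<lambda>_. 0)"
    proof
      assume "(\<lambda>i. root 3 (lam i) ^ 2) = (\<lambda>_. 0)"
      then have "lam = (\<lambda>_. 0)"
        by (simp add: fun_eq_iff)
      then show False
        using sum_lam by simp
    qed
    have "root 3 a ^ 2 * root 3 a = a" for a :: real
      using cbrt_cube[of a] by (simp add: power2_eq_square power3_eq_cube)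
    then show "(\<Sum>i\<in>UNIV. root 3 (lam i) ^ 2 *\<^sub>R H i) = 0"
      using rel by (simp add: H_def)
  qed
  moreover have "phi3 (L, lam) = (\<Sum>i\<in>UNIV. cube3 (H i))"
    by (simp add: phi3_def H_def cube3_scaleR cbrt_cube)
  ultimately show "y \<in> ?B"
    using y by blast
qed

lemma lin_dep_family_deformation:
  fixes H :: "'k::finite \<Rightarrow> real^'n"
  assumes "lin_dep_family H"
  obtains E M
  where "\<And>t. t > M \<Longrightarrow> (\<Sum>i\<in>UNIV. cube3 (H i + t *\<^sub>R E i)) \<in> phi3_image TYPE('k)"
proof -
  obtain c where "c \<noteq> (\<lambda>_. 0)" and rel_c: "(\<Sum>i\<in>UNIV. c i *\<^sub>R H i) = 0"
    using assms by (auto simp: lin_dep_family_def)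
  then obtain j where cj: "c j \<noteq> 0"
    by auto
  define d where "d i = c i / c j" for i
  have dj: "d j = 1"
    using cj by (simp add: d_def)
  have rel_d: "(\<Sum>i\<in>UNIV. d i *\<^sub>R H i) = 0"
  proof -
    have "(\<Sum>i\<in>UNIV. d i *\<^sub>R H i) = (1 / c j) *\<^sub>R (\<Sum>i\<in>UNIV. c i *\<^sub>R H i)"
      by (simp add: d_def scaleR_sum_right)
    then show ?thesis
      using rel_c by simp
  qed
  \<comment> \<open>With d_j = 1, adding t times the other forms to the relation and
      compensating in slot j gives positive weights 1 and d_i + t.\<close>
  define E where "E i = (if i = j then - (\<Sum>l\<in>UNIV - {j}. H l) else 0)" for i
  define M where "M = (\<Sum>i\<in>UNIV. \<bar>d i\<bar>)"
  have "(\<Sum>i\<in>UNIV. cube3 (H i + t *\<^sub>R E i)) \<in> phi3_image TYPE('k)"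
    if "t > M" for t
  proof (rule sum_cube3_mem_phi3_image)
    define w where "w i = (if i = j then 1 else d i + t)" for i
    show "w i > 0" for i
      using member_le_sum[of i UNIV "\<lambda>i. \<bar>d i\<bar>"] \<open>t > M\<close> by (auto simp: w_def M_def)
    have "(\<Sum>i\<in>UNIV. w i *\<^sub>R H i) =
        (\<Sum>i\<in>UNIV. d i *\<^sub>R H i) + t *\<^sub>R (\<Sum>l\<in>UNIV - {j}. H l)"
      by (simp add: sum.remove[of UNIV j] w_def dj sum.distrib scaleR_add_left scaleR_sum_right)
    moreover have "(\<Sum>i\<in>UNIV. w i *\<^sub>R t *\<^sub>R E i) = - t *\<^sub>R (\<Sum>l\<in>UNIV - {j}. H l)"
      by (simp add: sum.remove[of UNIV j] w_def E_def)
    ultimately show "(\<Sum>i\<in>UNIV. w i *\<^sub>R (H i + t *\<^sub>R E i)) = 0"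
      by (simp add: rel_d scaleR_add_right sum.distrib)
  qed
  then show ?thesis
    using that by blast
qed

lemma sum_cube3_dependent_mem_zariski_closure:
  fixes H :: "'k::finite \<Rightarrow> real^'n"
  assumes "lin_dep_family H"
  shows "(\<Sum>i\<in>UNIV. cube3 (H i)) \<in> zariski_closure (phi3_image TYPE('k))"
proof (rule mem_zariski_closureI)
  fix p :: "real^'n^'n^'n \<Rightarrow> real"
  assume p: "poly_fun p" and vanish: "\<forall>y\<in>phi3_image TYPE('k). p y = 0"
  obtain E M
    where deform: "\<And>t. t > M \<Longrightarrow> (\<Sum>i\<in>UNIV. cube3 (H i + t *\<^sub>R E i)) \<in> phi3_image TYPE('k)"
    using lin_dep_family_deformation[OF assms] by blast
  define \<gamma> where "\<gamma> t = (\<Sum>i\<in>UNIV. cube3 (H i + t *\<^sub>R E i))" for t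
  have curve: "polynomial_curve \<gamma>"
    unfolding \<gamma>_def
    by (intro polynomial_curve_sum polynomial_curve_cube3 polynomial_curve_line) simp
  have "p (\<gamma> t) = 0" if "t > M" for t
    using deform[OF that] vanish unfolding \<gamma>_def by blast
  then have "p (\<gamma> 0) = 0"
    by (rule poly_fun_vanishes_along_curve[OF p curve])
  then show "p (\<Sum>i\<in>UNIV. cube3 (H i)) = 0"
    by (simp add: \<gamma>_def)
qed

theorem lemma4p4:
  shows "C0 TYPE('k::finite) =
    zariski_closure {(\<Sum>i\<in>UNIV. cube3 (H i)) | H :: 'k \<Rightarrow> real^'n. lin_dep_family H}"
proof -
  let ?A = "phi3_image TYPE('k)"
  let ?B = "{(\<Sum>i\<in>UNIV. cube3 (H i)) | H :: 'k \<Rightarrow> real^'n. lin_dep_family H}"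
  have "?A \<subseteq> ?B"
    by (rule phi3_image_subset_sums_of_dependent_cubes)
  moreover have "?B \<subseteq> zariski_closure ?A"
    using sum_cube3_dependent_mem_zariski_closure by blast
  ultimately show ?thesis
    unfolding C0_def by (rule zariski_closure_eqI)
qed

end
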